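(* Assume the setting below with $Y_i(0)=0$ for all $i=1,\dots,N$. Fix $1\le k\le N$ and $c\in\mathbb{R}$, and define $$p^{\mathrm H}_{k,c} \equiv G_{\mathrm H}\big(n(c);\,N,\,N-k,\,N_1\big).$$ Then $p^{\mathrm H}_{k,c}$ is a valid $p$-value for testing the null hypothesis $H_{k,c}:\ \tau_{(k)}\le c$. That is, whenever $H_{k,c}$ holds, $\Pr\big(p^{\mathrm H}_{k,c}\le\alpha\big)\le\alpha$ for every $\alpha\in(0,1)$. Here the probability is over the random assignment $Z$.
   Context: Setting: - There are $N$ units. Each unit $i$ has fixed (non-random) potential outcomes $Y_i(1),Y_i(0)\in\mathbb{R}$ and individual treatment effect (ITE) $\tau_i=Y_i(1)-Y_i(0)$. - The sorted ITEs are $\tau_{(1)}\le\tau_{(2)}\le\dots\le\tau_{(N)}$. - Completely randomized experiment (CRE): for a fixed $1\le N_1<N$, the assignment vector $Z=(Z_1,\dots,Z_N)\in\{0,1\}^N$ is uniformly distributed over all vectors with exactly $N_1$ ones. Unit $i$ is treated if $Z_i=1$. - The observed outcome is $Y_i=Z_iY_i(1)+(1-Z_i)Y_i(0)$. - For $c\in\mathbb{R}$, let $N(c)=\sum_{i=1}^N\mathbb{1}(\tau_i>c)$ and $n(c)=\sum_{i=1}^N Z_i\mathbb{1}(Y_i>c)$. - The null hypothesis $H_{k,c}$ is $\tau_{(k)}\le c$, which is equivalent to $N(c)\le N-k$. - $G_{\mathrm H}(x;N,n,N_1)=\Pr(X\ge x)$, where $X$ is Hypergeometric with parameters $(N,n,N_1)$: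 the number of marked items in a simple random sample of size $N_1$ drawn without replacement from a population of $N$ items, of which $n$ are marked. *)

theory Defs
  imports "HOL-Probability.Probability"
begin

text \<open>Units are indexed by 0..<N. An assignment Z is represented by its set of
treated units S = {i. Z_i = 1}.\<close>

definition ite :: "(nat \<Rightarrow> real) \<Rightarrow> (nat \<Rightarrow> real) \<Rightarrow> nat \<Rightarrow> real" where
  "ite Y1 Y0 i = Y1 i - Y0 i"

definition tau_ord :: "nat \<Rightarrow> (nat \<Rightarrow> real) \<Rightarrow> (nat \<Rightarrow> real) \<Rightarrow> nat \<Rightarrow> real" where
  "tau_ord N Y1 Y0 k = sort (map (ite Y1 Y0) [0..<N]) ! (k - 1)"

text \<open>Support of the CRE: all treated sets of size N1.\<close>
definition assignments :: "nat \<Rightarrow> nat \<Rightarrow> nat set set" where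
  "assignments N N1 = {S. S \<subseteq> {0..<N} \<and> card S = N1}"

definition observed :: "(nat \<Rightarrow> real) \<Rightarrow> (nat \<Rightarrow> real) \<Rightarrow> nat set \<Rightarrow> nat \<Rightarrow> real" where
  "observed Y1 Y0 S i = (if i \<in> S then Y1 i else Y0 i)"

definition nstat :: "nat \<Rightarrow> (nat \<Rightarrow> real) \<Rightarrow> (nat \<Rightarrow> real) \<Rightarrow> real \<Rightarrow> nat set \<Rightarrow> nat" where
  "nstat N Y1 Y0 c S = card {i \<in> {0..<N}. i \<in> S \<and> observed Y1 Y0 S i > c}"

text \<open>Hypergeometric upper tail: G_H(x; NN, n, N1) = Pr(X >= x), X ~ Hypergeometric(NN, n, N1).\<close>
definition G_H :: "nat \<Rightarrow> nat \<Rightarrow> nat \<Rightarrow> nat \<Rightarrow> real" where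
  "G_H x NN n N1 =
     (\<Sum>j\<in>{x..N1}. real (n choose j) * real ((NN - n) choose (N1 - j))) / real (NN choose N1)"

definition pH :: "nat \<Rightarrow> nat \<Rightarrow> nat \<Rightarrow> (nat \<Rightarrow> real) \<Rightarrow> (nat \<Rightarrow> real) \<Rightarrow> real \<Rightarrow> nat set \<Rightarrow> real" where
  "pH N N1 k Y1 Y0 c S = G_H (nstat N Y1 Y0 c S) N (N - k) N1"

end

theory Submission
  imports Defs
begin

text \<open>Let A be the set of units with ITE above c. Since Y(0) = 0, the count n(c) is the
number of treated units in A, and under the null A has at most N - k elements, so it
can be enlarged to a set B of exactly N - k units. The number of treated units in B
is hypergeometric with parameters (N, N - k, N1) and dominates n(c); as G_H is
antitone, the p-value is at least the upper tail of this hypergeometric variable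
evaluated at itself, and such a tail probability is super-uniform.\<close>

lemma upper_tail_prob_le:
  fixes p :: "'a pmf" and X :: "'a \<Rightarrow> nat" and \<alpha> :: real
  assumes "0 \<le> \<alpha>"
  shows "measure_pmf.prob p
           {\<omega>. measure_pmf.prob p {\<omega>'. X \<omega> \<le> X \<omega>'} \<le> \<alpha>} \<le> \<alpha>"
proof (cases "\<exists>\<omega>. measure_pmf.prob p {\<omega>'. X \<omega> \<le> X \<omega>'} \<le> \<alpha>")
  case False
  then show ?thesis using assms by simp
next
  case True
  let ?E = "{\<omega>. measure_pmf.prob p {\<omega>'. X \<omega> \<le> X \<omega>'} \<le> \<alpha>}"
  obtain \<omega>\<^sub>0 where "\<omega>\<^sub>0 \<in> ?E" and least: "\<And>\<omega>. \<omega> \<in> ?E \<Longrightarrow> X \<omega>\<^sub>0 \<le> X \<omega>"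
    using ex_has_least_nat[of "\<lambda>\<omega>. \<omega> \<in> ?E" _ X] True by auto
  have "measure_pmf.prob p ?E \<le> measure_pmf.prob p {\<omega>'. X \<omega>\<^sub>0 \<le> X \<omega>'}"
    using least by (intro measure_pmf.finite_measure_mono) auto
  also have "\<dots> \<le> \<alpha>" using \<open>\<omega>\<^sub>0 \<in> ?E\<close> by simp
  finally show ?thesis .
qed

lemma card_subsets_Int_eq:
  assumes "finite U" and "B \<subseteq> U" and "j \<le> n"
  shows "card {S. S \<subseteq> U \<and> card S = n \<and> card (S \<inter> B) = j}
         = (card B choose j) * ((card U - card B) choose (n - j))"
proof -
  let ?L = "{S. S \<subseteq> U \<and> card S = n \<and> card (S \<inter> B) = j}"
  let ?R = "{X. X \<subseteq> B \<and> card X = j} \<times> {Y. Y \<subseteq> U - B \<and> card Y = n - j}"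
  have "finite B" using assms(1,2) finite_subset by blast
  have "bij_betw (\<lambda>S. (S \<inter> B, S - B)) ?L ?R"
  proof (rule bij_betw_byWitness[where f' = "\<lambda>(X, Y). X \<union> Y"])
    show "\<forall>S\<in>?L. (\<lambda>(X, Y). X \<union> Y) (S \<inter> B, S - B) = S" by blast
    show "\<forall>XY\<in>?R. (\<lambda>S. (S \<inter> B, S - B)) ((\<lambda>(X, Y). X \<union> Y) XY) = XY" by blast
    show "(\<lambda>S. (S \<inter> B, S - B)) ` ?L \<subseteq> ?R"
    proof (rule image_subsetI)
      fix S assume S: "S \<in> ?L"
      then have "card S = card (S \<inter> B) + card (S - B)"
        using assms(1) by (metis (mono_tags) card_Int_Diff finite_subset mem_Collect_eq)
      then show "(S \<inter> B, S - B) \<in> ?R" using S by auto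
    qed
    show "(\<lambda>(X, Y). X \<union> Y) ` ?R \<subseteq> ?L"
    proof (rule image_subsetI)
      fix XY assume "XY \<in> ?R"
      then obtain X Y where "XY = (X, Y)"
        and XY: "X \<subseteq> B" "card X = j" "Y \<subseteq> U - B" "card Y = n - j" by blast
      have "finite X" "finite Y" using XY \<open>finite B\<close> assms(1) finite_subset by blast+
      moreover have "(X \<union> Y) \<inter> B = X" "X \<inter> Y = {}" using XY by blast+
      ultimately show "(\<lambda>(X, Y). X \<union> Y) XY \<in> ?L"
        using \<open>XY = (X, Y)\<close> XY assms(2,3) by (auto simp: card_Un_disjoint)
    qed
  qed
  then have "card ?L = card ?R" by (rule bij_betw_same_card)
  also have "\<dots> = (card B choose j) * (card (U - B) choose (n - j))"
    using n_subsets[OF \<open>finite B\<close>] n_subsets[of "U - B"] assms(1)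
    by (simp add: card_cartesian_product)
  also have "card (U - B) = card U - card B"
    using card_Diff_subset[OF \<open>finite B\<close> assms(2)] .
  finally show ?thesis .
qed

lemma card_subsets_Int_ge:
  assumes "finite U" and "B \<subseteq> U"
  shows "card {S. S \<subseteq> U \<and> card S = n \<and> x \<le> card (S \<inter> B)}
         = (\<Sum>j\<in>{x..n}. (card B choose j) * ((card U - card B) choose (n - j)))"
proof -
  let ?L = "\<lambda>j. {S. S \<subseteq> U \<and> card S = n \<and> card (S \<inter> B) = j}"
  have "card (S \<inter> B) \<le> card S" if "S \<subseteq> U" for S
    using that assms(1) finite_subset by (metis card_mono inf_le1)
  then have "{S. S \<subseteq> U \<and> card S = n \<and> x \<le> card (S \<inter> B)} = (\<Union>j\<in>{x..n}. ?L j)"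
    by auto
  then have "card {S. S \<subseteq> U \<and> card S = n \<and> x \<le> card (S \<inter> B)} = (\<Sum>j\<in>{x..n}. card (?L j))"
    using assms(1) by (simp add: card_UN_disjoint disjoint_iff)
  also have "\<dots> = (\<Sum>j\<in>{x..n}. (card B choose j) * ((card U - card B) choose (n - j)))"
    using assms by (intro sum.cong) (auto simp: card_subsets_Int_eq)
  finally show ?thesis .
qed

lemma card_assignments: "card (assignments N N1) = N choose N1"
  using n_subsets[of "{0..<N}" N1] by (simp add: assignments_def)

lemma set_pmf_assignments:
  assumes "N1 \<le> N"
  shows "set_pmf (pmf_of_set (assignments N N1)) = assignments N N1"
proof (rule set_pmf_of_set)
  show "assignments N N1 \<noteq> {}"
    using card_assignments[of N N1] assms by (metis binomial_eq_0_iff card.empty not_less)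
qed (simp add: assignments_def)

lemma prob_assignments_Int_ge:
  assumes "N1 \<le> N" and "B \<subseteq> {0..<N}"
  shows "measure_pmf.prob (pmf_of_set (assignments N N1)) {S. x \<le> card (S \<inter> B)}
         = G_H x N (card B) N1"
proof -
  have "assignments N N1 \<noteq> {}" "finite (assignments N N1)"
    using set_pmf_assignments[OF assms(1)] by (metis set_pmf_not_empty, simp add: assignments_def)
  moreover have "assignments N N1 \<inter> {S. x \<le> card (S \<inter> B)}
      = {S. S \<subseteq> {0..<N} \<and> card S = N1 \<and> x \<le> card (S \<inter> B)}"
    by (auto simp: assignments_def)
  ultimately show ?thesis
    using card_subsets_Int_ge[of "{0..<N}" B N1 x] assms(2)
    by (simp add: measure_pmf_of_set card_assignments G_H_def)
qed

lemma G_H_antimono: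
  assumes "x \<le> y"
  shows "G_H y NN n N1 \<le> G_H x NN n N1"
  unfolding G_H_def
  by (rule divide_right_mono, rule sum_mono2) (use assms in auto)

lemma length_filter_greater_le:
  fixes xs :: "'a::linorder list"
  assumes "1 \<le> k" and "k \<le> length xs" and "sort xs ! (k - 1) \<le> c"
  shows "length (filter (\<lambda>x. c < x) xs) \<le> length xs - k"
proof -
  let ?L = "sort xs"
  have "{i. i < length xs \<and> c < ?L ! i} \<subseteq> {k..<length xs}"
  proof clarify
    fix i assume i: "i < length xs" "c < ?L ! i"
    show "i \<in> {k..<length xs}"
    proof (rule ccontr)
      assume "i \<notin> {k..<length xs}"
      then have "?L ! i \<le> ?L ! (k - 1)"
        using i(1) assms(2) by (intro sorted_nth_mono) auto
      then show False using i(2) assms(3) by simp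
    qed
  qed
  then have "card {i. i < length xs \<and> c < ?L ! i} \<le> length xs - k"
    by (metis card_atLeastLessThan card_mono finite_atLeastLessThan)
  moreover have "length (filter (\<lambda>x. c < x) xs) = length (filter (\<lambda>x. c < x) ?L)"
    by (simp add: filter_sort)
  ultimately show ?thesis by (simp add: length_filter_conv_card)
qed

theorem proposition1:
  fixes N N1 k :: nat and Y1 Y0 :: "nat \<Rightarrow> real" and c \<alpha> :: real
  assumes "1 \<le> N1" and "N1 < N"
    and "\<forall>i<N. Y0 i = 0"
    and "1 \<le> k" and "k \<le> N"
    and "tau_ord N Y1 Y0 k \<le> c"
    and "0 < \<alpha>" and "\<alpha> < 1"
  shows "measure_pmf.prob (pmf_of_set (assignments N N1))
           {S. pH N N1 k Y1 Y0 c S \<le> \<alpha>} \<le> \<alpha>"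
proof -
  define A where "A = {i. i < N \<and> c < Y1 i}"
  define p where "p = pmf_of_set (assignments N N1)"
  have "card A = length (filter (\<lambda>x. c < x) (map (ite Y1 Y0) [0..<N]))"
    using assms(3) unfolding A_def length_filter_conv_card
    by (intro arg_cong[where f = card]) (auto simp: ite_def)
  also have "\<dots> \<le> N - k"
    using assms(4-6) length_filter_greater_le[of k "map (ite Y1 Y0) [0..<N]" c]
    by (simp add: tau_ord_def)
  finally obtain B where "A \<subseteq> B" "B \<subseteq> {0..<N}" "card B = N - k"
    using exists_subset_between[of A "N - k" "{0..<N}"] by (force simp: A_def)
  have set_p: "set_pmf p = assignments N N1"
    unfolding p_def using assms(2) by (simp add: set_pmf_assignments)
  let ?X = "\<lambda>S. card (S \<inter> B)"
  have "pH N N1 k Y1 Y0 c S \<ge> measure_pmf.prob p {S'. ?X S \<le> ?X S'}"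
    if "S \<in> set_pmf p" for S
  proof -
    have "finite S" using that set_p by (auto simp: assignments_def finite_subset)
    have "nstat N Y1 Y0 c S = card (S \<inter> A)"
      by (auto simp: nstat_def A_def observed_def intro: arg_cong[where f = card])
    also have "\<dots> \<le> ?X S" using \<open>A \<subseteq> B\<close> \<open>finite S\<close> by (intro card_mono) auto
    finally show ?thesis
      using prob_assignments_Int_ge[of N1 N B] assms(2) \<open>B \<subseteq> _\<close> \<open>card B = _\<close>
      by (simp add: pH_def p_def G_H_antimono)
  qed
  then have "measure_pmf.prob p {S. pH N N1 k Y1 Y0 c S \<le> \<alpha>}
      \<le> measure_pmf.prob p {S. measure_pmf.prob p {S'. ?X S \<le> ?X S'} \<le> \<alpha>}"
    by (intro measure_pmf.finite_measure_mono_AE)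
      (auto simp: AE_measure_pmf_iff intro: order_trans)
  also have "\<dots> \<le> \<alpha>" using assms(7) by (intro upper_tail_prob_le) simp
  finally show ?thesis unfolding p_def .
qed

end
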